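(* In the setting described in the context (with $L=[0,1]$), let $q\in\{1,\dots,n\}$ and assume there exists $A\subseteq\mathcal C$ with $|A|=q$ and $\eta_q(A)=1$. Then $$\min_{\mu\ q\text{-maxitive capacity}}\ \max_{1\le k\le N}|S_\mu(x^{(k)})-\alpha^{(k)}|=\Delta_q,$$ where the minimum is over all $q$-maxitive capacities $\mu:2^{\mathcal C}\to[0,1]$ (and is attained).
   Context: Let $\mathcal C=\{1,\dots,n\}$ and $L=[0,1]$. A capacity is a map $\mu:2^{\mathcal C}\to[0,1]$ with $\mu(\emptyset)=0$, $\mu(\mathcal C)=1$, monotone for inclusion; it is $q$-maxitive if for all $X$ with $|X|>q$, $\mu(X)=\max_{Y\subsetneq X,\ |Y|\le q}\mu(Y)$. Sugeno integral: $S_\mu(x)=\max_{A\subseteq\mathcal C}\min(\min_{i\in A}x_i,\mu(A))$ with $\min_{i\in\emptyset}x_i=1$. Training data: $N$ pairs $(x^{(k)},\alpha^{(k)})$, $x^{(k)}\in[0,1]^n$, $\alpha^{(k)}\in[0,1]$. For nonempty $A$, $m_{k,A}=\min_{i\in A}x^{(k)}_i$. Write $t^+=\max(t,0)$. For $1\le i\le N$ and $0<|A|\le q$, let $\sigma_G(\alpha^{(i)},m_{l,A},\alpha^{(l)})=\min\big(\tfrac{(\alpha^{(i)}-\alpha^{(l)})^+}{2},(m_{l,A}-\alpha^{(l)})^+\big)$, $\delta_{i,A}=\max\big((\alpha^{(i)}-m_{i,A})^+,\max_{1\le l\le N}\sigma_G(\alpha^{(i)},m_{l,A},\alpha^{(l)})\big)$,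 $\delta_i=\min_{0<|A|\le q}\delta_{i,A}$, and $\Delta_q=\max_{1\le i\le N}\delta_i$. For $0<|A|\le q$, $\eta_q(A)=\min_{1\le k\le N}\big(m_{k,A}\to_G\min(\alpha^{(k)}+\Delta_q,1)\big)$, where $a\to_G b=1$ if $a\le b$ and $a\to_G b=b$ otherwise. *)

theory Defs
  imports Complex_Main
begin

text \<open>Criteria are C = {1..n}; subsets of criteria are nat sets contained in {1..n}.
  Training data: x k i (k in {1..N}, i in {1..n}) and alpha k (k in {1..N}).\<close>

definition is_capacity :: "nat \<Rightarrow> (nat set \<Rightarrow> real) \<Rightarrow> bool" where
  "is_capacity n \<mu> \<longleftrightarrow>
     (\<forall>A. A \<subseteq> {1..n} \<longrightarrow> 0 \<le> \<mu> A \<and> \<mu> A \<le> 1) \<and>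
     \<mu> {} = 0 \<and> \<mu> {1..n} = 1 \<and>
     (\<forall>A B. A \<subseteq> B \<and> B \<subseteq> {1..n} \<longrightarrow> \<mu> A \<le> \<mu> B)"

definition q_maxitive :: "nat \<Rightarrow> nat \<Rightarrow> (nat set \<Rightarrow> real) \<Rightarrow> bool" where
  "q_maxitive n q \<mu> \<longleftrightarrow>
     (\<forall>X. X \<subseteq> {1..n} \<and> card X > q \<longrightarrow>
        \<mu> X = Max {\<mu> Y | Y. Y \<subset> X \<and> card Y \<le> q})"

definition q_maxitive_capacity :: "nat \<Rightarrow> nat \<Rightarrow> (nat set \<Rightarrow> real) \<Rightarrow> bool" where
  "q_maxitive_capacity n q \<mu> \<longleftrightarrow> is_capacity n \<mu> \<and> q_maxitive n q \<mu>"

definition minx :: "(nat \<Rightarrow> real) \<Rightarrow> nat set \<Rightarrow> real" where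
  "minx z A = (if A = {} then 1 else Min (z ` A))"

definition sugeno :: "nat \<Rightarrow> (nat set \<Rightarrow> real) \<Rightarrow> (nat \<Rightarrow> real) \<Rightarrow> real" where
  "sugeno n \<mu> z = Max {min (minx z A) (\<mu> A) | A. A \<subseteq> {1..n}}"

definition max_error ::
  "nat \<Rightarrow> nat \<Rightarrow> (nat \<Rightarrow> nat \<Rightarrow> real) \<Rightarrow> (nat \<Rightarrow> real) \<Rightarrow> (nat set \<Rightarrow> real) \<Rightarrow> real" where
  "max_error n N x \<alpha> \<mu> = Max {\<bar>sugeno n \<mu> (x k) - \<alpha> k\<bar> | k. k \<in> {1..N}}"

definition pos :: "real \<Rightarrow> real" where
  "pos t = max t 0"

definition godel_imp :: "real \<Rightarrow> real \<Rightarrow> real" where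
  "godel_imp a b = (if a \<le> b then 1 else b)"

definition small_sets :: "nat \<Rightarrow> nat \<Rightarrow> nat set set" where
  "small_sets n q = {A. A \<subseteq> {1..n} \<and> 0 < card A \<and> card A \<le> q}"

definition sigma_G :: "real \<Rightarrow> real \<Rightarrow> real \<Rightarrow> real" where
  "sigma_G ai m al = min (pos (ai - al) / 2) (pos (m - al))"

definition delta_iA ::
  "nat \<Rightarrow> (nat \<Rightarrow> nat \<Rightarrow> real) \<Rightarrow> (nat \<Rightarrow> real) \<Rightarrow> nat \<Rightarrow> nat set \<Rightarrow> real" where
  "delta_iA N x \<alpha> i A =
     max (pos (\<alpha> i - Min (x i ` A)))
         (Max {sigma_G (\<alpha> i) (Min (x l ` A)) (\<alpha> l) | l. l \<in> {1..N}})"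

definition delta_i ::
  "nat \<Rightarrow> nat \<Rightarrow> nat \<Rightarrow> (nat \<Rightarrow> nat \<Rightarrow> real) \<Rightarrow> (nat \<Rightarrow> real) \<Rightarrow> nat \<Rightarrow> real" where
  "delta_i n q N x \<alpha> i = Min {delta_iA N x \<alpha> i A | A. A \<in> small_sets n q}"

definition Delta ::
  "nat \<Rightarrow> nat \<Rightarrow> nat \<Rightarrow> (nat \<Rightarrow> nat \<Rightarrow> real) \<Rightarrow> (nat \<Rightarrow> real) \<Rightarrow> real" where
  "Delta n q N x \<alpha> = Max {delta_i n q N x \<alpha> i | i. i \<in> {1..N}}"

definition eta ::
  "nat \<Rightarrow> nat \<Rightarrow> nat \<Rightarrow> (nat \<Rightarrow> nat \<Rightarrow> real) \<Rightarrow> (nat \<Rightarrow> real) \<Rightarrow> nat set \<Rightarrow> real" where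
  "eta n q N x \<alpha> A =
     Min {godel_imp (Min (x k ` A)) (min (\<alpha> k + Delta n q N x \<alpha>) 1) | k. k \<in> {1..N}}"

end

theory Submission
  imports Defs
begin

(* A q-maxitive capacity is determined by its values on sets of at most q criteria, so its
   Sugeno integral is attained on the empty set or on such a small set A.
   Lower bound: if mu has maximal error e and S_mu(x_i) is attained on A, then
   alpha_i - e <= min(m_(i,A), mu(A)), while min(m_(l,A), mu(A)) <= S_mu(x_l) <= alpha_l + e for
   every l; so either m_(l,A) - alpha_l <= e or alpha_i - alpha_l <= 2e, i.e. delta_(i,A) <= e.
   Upper bound: eta_q(A) is the largest value mu(A) may take without S_mu(x_k) exceeding
   alpha_k + Delta_q. Extending eta_q from the small sets by maxitivity gives a q-maxitive
   capacity once eta_q(A) = 1 for some |A| = q, and the sets A with delta_(k,A) <= Delta_q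
   keep S_mu(x_k) above alpha_k - Delta_q. *)

lemma sugeno_eq_Max_image: "sugeno n \<mu> z = Max ((\<lambda>A. min (minx z A) (\<mu> A)) ` Pow {1..n})"
  unfolding sugeno_def by (rule arg_cong[where f = Max]) auto

lemma sugeno_ge: "A \<subseteq> {1..n} \<Longrightarrow> min (minx z A) (\<mu> A) \<le> sugeno n \<mu> z"
  unfolding sugeno_eq_Max_image by (rule Max_ge) auto

lemma sugeno_attained: "\<exists>A \<subseteq> {1..n}. sugeno n \<mu> z = min (minx z A) (\<mu> A)"
proof -
  have "sugeno n \<mu> z \<in> (\<lambda>A. min (minx z A) (\<mu> A)) ` Pow {1..n}"
    unfolding sugeno_eq_Max_image by (rule Max_in) auto
  then show ?thesis by auto
qed

lemma q_maxitive_attained: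
  assumes "q_maxitive n q \<mu>" and "X \<subseteq> {1..n}" and "q < card X"
  shows "\<exists>Y \<subset> X. card Y \<le> q \<and> \<mu> X = \<mu> Y"
proof -
  let ?S = "{\<mu> Y | Y. Y \<subset> X \<and> card Y \<le> q}"
  have "finite X" using assms(2) finite_subset by blast
  moreover have "?S \<subseteq> \<mu> ` Pow X" by blast
  ultimately have "finite ?S" by (meson finite_Pow_iff finite_imageI finite_subset)
  moreover have "\<mu> {} \<in> ?S" using assms(3) by force
  ultimately have "Max ?S \<in> ?S" by (intro Max_in) auto
  moreover have "\<mu> X = Max ?S" using assms unfolding q_maxitive_def by blast
  ultimately show ?thesis by auto
qed

lemma sugeno_q_maxitive_attained:
  assumes "q_maxitive n q \<mu>" and "\<mu> {} = 0"
  shows "sugeno n \<mu> z = 0 \<or> (\<exists>A \<in> small_sets n q. sugeno n \<mu> z = min (Min (z ` A)) (\<mu> A))"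
proof -
  obtain A where A: "A \<subseteq> {1..n}" "sugeno n \<mu> z = min (minx z A) (\<mu> A)"
    using sugeno_attained by blast
  have "finite A" using A(1) finite_subset by blast
  obtain Y where Y: "Y \<subseteq> A" "card Y \<le> q" "\<mu> A = \<mu> Y"
  proof (cases "card A \<le> q")
    case True
    then show ?thesis using that[of A] by simp
  next
    case False
    then obtain Y where "Y \<subset> A" "card Y \<le> q" "\<mu> A = \<mu> Y"
      using q_maxitive_attained[OF assms(1) A(1)] by auto
    then show ?thesis using that[of Y] by simp
  qed
  have "sugeno n \<mu> z \<le> min (minx z Y) (\<mu> Y)"
  proof (cases "Y = {}")
    case True
    then show ?thesis using A(2) Y(3) assms(2) by (simp add: minx_def)
  next
    case False
    then have "minx z A \<le> minx z Y"
      using Y(1) \<open>finite A\<close> by (auto simp: minx_def intro: Min_antimono)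
    then show ?thesis using A(2) Y(3) by linarith
  qed
  moreover have "min (minx z Y) (\<mu> Y) \<le> sugeno n \<mu> z"
    using Y(1) A(1) by (intro sugeno_ge) auto
  ultimately have S: "sugeno n \<mu> z = min (minx z Y) (\<mu> Y)" by linarith
  show ?thesis
  proof (cases "Y = {}")
    case True
    then show ?thesis using S assms(2) by (simp add: minx_def)
  next
    case False
    moreover have "finite Y" using Y(1) \<open>finite A\<close> by (rule finite_subset)
    ultimately have "Y \<in> small_sets n q"
      using Y(1,2) A(1) by (auto simp: small_sets_def card_gt_0_iff)
    then show ?thesis using S \<open>Y \<noteq> {}\<close> by (auto simp: minx_def)
  qed
qed

definition maxitive_ext :: "nat \<Rightarrow> (nat set \<Rightarrow> real) \<Rightarrow> nat set \<Rightarrow> real" where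
  "maxitive_ext q \<nu> X = Max (\<nu> ` {Y. Y \<subseteq> X \<and> card Y \<le> q})"

lemma finite_small_subsets: "finite X \<Longrightarrow> finite {Y. Y \<subseteq> X \<and> card Y \<le> q}"
  by (rule finite_subset[of _ "Pow X"]) auto

lemma maxitive_ext_ge: "finite X \<Longrightarrow> Y \<subseteq> X \<Longrightarrow> card Y \<le> q \<Longrightarrow> \<nu> Y \<le> maxitive_ext q \<nu> X"
  unfolding maxitive_ext_def by (rule Max_ge) (auto simp: finite_small_subsets)

lemma maxitive_ext_attained:
  assumes "finite X"
  shows "\<exists>Y \<subseteq> X. card Y \<le> q \<and> maxitive_ext q \<nu> X = \<nu> Y"
proof -
  have "maxitive_ext q \<nu> X \<in> \<nu> ` {Y. Y \<subseteq> X \<and> card Y \<le> q}"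
    unfolding maxitive_ext_def using assms by (intro Max_in) (auto simp: finite_small_subsets)
  then show ?thesis by auto
qed

lemma maxitive_ext_mono:
  assumes "finite B" and "A \<subseteq> B"
  shows "maxitive_ext q \<nu> A \<le> maxitive_ext q \<nu> B"
proof -
  obtain Y where "Y \<subseteq> A" "card Y \<le> q" "maxitive_ext q \<nu> A = \<nu> Y"
    using maxitive_ext_attained assms finite_subset by metis
  then show ?thesis using maxitive_ext_ge[OF assms(1)] assms(2) by auto
qed

lemma maxitive_ext_eq:
  assumes mono: "\<And>A B. A \<subseteq> B \<Longrightarrow> finite B \<Longrightarrow> \<nu> A \<le> \<nu> B"
    and "finite Y" and "card Y \<le> q"
  shows "maxitive_ext q \<nu> Y = \<nu> Y"
proof -
  obtain Y' where "Y' \<subseteq> Y" "maxitive_ext q \<nu> Y = \<nu> Y'"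
    using maxitive_ext_attained[OF \<open>finite Y\<close>] by blast
  then show ?thesis using mono[of Y' Y] maxitive_ext_ge[of Y Y q \<nu>] assms(2,3) by auto
qed

lemma q_maxitive_maxitive_ext:
  assumes mono: "\<And>A B. A \<subseteq> B \<Longrightarrow> finite B \<Longrightarrow> \<nu> A \<le> \<nu> B"
  shows "q_maxitive n q (maxitive_ext q \<nu>)"
  unfolding q_maxitive_def
proof (intro allI impI)
  fix X assume X: "X \<subseteq> {1..n} \<and> q < card X"
  then have "finite X" using finite_subset by blast
  have "{maxitive_ext q \<nu> Y | Y. Y \<subset> X \<and> card Y \<le> q} = \<nu> ` {Y. Y \<subseteq> X \<and> card Y \<le> q}"
  proof (intro equalityI subsetI)
    fix v assume "v \<in> {maxitive_ext q \<nu> Y | Y. Y \<subset> X \<and> card Y \<le> q}"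
    then obtain Y where "v = maxitive_ext q \<nu> Y" "Y \<subset> X" "card Y \<le> q" by blast
    then show "v \<in> \<nu> ` {Y. Y \<subseteq> X \<and> card Y \<le> q}"
      using maxitive_ext_eq[where \<nu> = \<nu>, OF mono] \<open>finite X\<close> by (auto intro: finite_subset)
  next
    fix v assume "v \<in> \<nu> ` {Y. Y \<subseteq> X \<and> card Y \<le> q}"
    then obtain Y where "v = \<nu> Y" "Y \<subseteq> X" "card Y \<le> q" by blast
    moreover from this have "Y \<subset> X" using X by auto
    ultimately show "v \<in> {maxitive_ext q \<nu> Y | Y. Y \<subset> X \<and> card Y \<le> q}"
      using maxitive_ext_eq[where \<nu> = \<nu>, OF mono] \<open>finite X\<close> by (metis (mono_tags) CollectI finite_subset)
  qed
  then show "maxitive_ext q \<nu> X = Max {maxitive_ext q \<nu> Y | Y. Y \<subset> X \<and> card Y \<le> q}"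
    by (simp add: maxitive_ext_def)
qed

lemma is_capacity_maxitive_ext:
  assumes mono: "\<And>A B. A \<subseteq> B \<Longrightarrow> finite B \<Longrightarrow> \<nu> A \<le> \<nu> B"
    and bounds: "\<And>Y. 0 \<le> \<nu> Y \<and> \<nu> Y \<le> 1" and "\<nu> {} = 0"
    and "A \<subseteq> {1..n}" and "card A \<le> q" and "\<nu> A = 1"
  shows "is_capacity n (maxitive_ext q \<nu>)"
proof -
  have ext_bounds: "0 \<le> maxitive_ext q \<nu> X \<and> maxitive_ext q \<nu> X \<le> 1" if "finite X" for X
    using maxitive_ext_attained[OF that] bounds by metis
  have "1 \<le> maxitive_ext q \<nu> {1..n}"
    using maxitive_ext_ge[of "{1..n}" A q \<nu>] assms(4-6) by simp
  then have "maxitive_ext q \<nu> {1..n} = 1" using ext_bounds[of "{1..n}"] by simp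
  moreover have "maxitive_ext q \<nu> {} = 0" using maxitive_ext_eq[OF mono] \<open>\<nu> {} = 0\<close> by simp
  ultimately show ?thesis unfolding is_capacity_def
    using ext_bounds maxitive_ext_mono by (meson finite_atLeastAtMost finite_subset)
qed

lemma sigma_G_le:
  assumes "0 \<le> e" and "a - e \<le> min m \<mu>" and "min m' \<mu> \<le> b + e"
  shows "sigma_G a m' b \<le> e"
  using assms by (auto simp: sigma_G_def pos_def min_def max_def split: if_splits)

lemma le_godel_imp_if_sigma_G_le:
  assumes "sigma_G a m b \<le> d" and "0 \<le> d" and "a \<le> 1"
  shows "a - d \<le> godel_imp m (min (b + d) 1)"
  using assms by (auto simp: sigma_G_def godel_imp_def pos_def min_def max_def split: if_splits)

lemma min_godel_imp_le: "min a (godel_imp a b) \<le> b"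
  by (simp add: godel_imp_def min_def)

lemma godel_imp_antimono: "a \<le> a' \<Longrightarrow> b \<le> 1 \<Longrightarrow> godel_imp a' b \<le> godel_imp a b"
  by (auto simp: godel_imp_def)

lemma max_error_ge:
  "k \<in> {1..N} \<Longrightarrow> \<bar>sugeno n \<mu> (x k) - \<alpha> k\<bar> \<le> max_error n N x \<alpha> \<mu>"
  unfolding max_error_def Setcompr_eq_image by (intro Max_ge) auto

lemma max_error_le_iff:
  "N \<ge> 1 \<Longrightarrow> max_error n N x \<alpha> \<mu> \<le> e \<longleftrightarrow> (\<forall>k \<in> {1..N}. \<bar>sugeno n \<mu> (x k) - \<alpha> k\<bar> \<le> e)"
  unfolding max_error_def Setcompr_eq_image by (subst Max_le_iff) auto

lemma delta_iA_le_iff: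
  "N \<ge> 1 \<Longrightarrow> delta_iA N x \<alpha> i A \<le> e \<longleftrightarrow>
     pos (\<alpha> i - Min (x i ` A)) \<le> e \<and> (\<forall>l \<in> {1..N}. sigma_G (\<alpha> i) (Min (x l ` A)) (\<alpha> l) \<le> e)"
  unfolding delta_iA_def Setcompr_eq_image by (subst max.bounded_iff, subst Max_le_iff) auto

locale training_data =
  fixes n N q :: nat and x :: "nat \<Rightarrow> nat \<Rightarrow> real" and \<alpha> :: "nat \<Rightarrow> real"
  assumes N_pos: "N \<ge> 1"
    and x_nonneg: "\<And>k i. k \<in> {1..N} \<Longrightarrow> i \<in> {1..n} \<Longrightarrow> 0 \<le> x k i"
    and \<alpha>_unit: "\<And>k. k \<in> {1..N} \<Longrightarrow> 0 \<le> \<alpha> k \<and> \<alpha> k \<le> 1"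
    and q_range: "q \<in> {1..n}"
begin

lemma singleton_small: "{1} \<in> small_sets n q"
  using q_range by (auto simp: small_sets_def)

lemma delta_i_attained: "\<exists>A \<in> small_sets n q. delta_i n q N x \<alpha> i = delta_iA N x \<alpha> i A"
proof -
  have "finite (small_sets n q)"
    by (rule finite_subset[of _ "Pow {1..n}"]) (auto simp: small_sets_def)
  then have "delta_i n q N x \<alpha> i \<in> (\<lambda>A. delta_iA N x \<alpha> i A) ` small_sets n q"
    unfolding delta_i_def Setcompr_eq_image using singleton_small by (intro Min_in) auto
  then show ?thesis by auto
qed

lemma delta_i_le: "A \<in> small_sets n q \<Longrightarrow> delta_i n q N x \<alpha> i \<le> delta_iA N x \<alpha> i A"
  unfolding delta_i_def Setcompr_eq_image
  by (rule Min_le) (auto intro: finite_subset[of _ "Pow {1..n}"] simp: small_sets_def)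

lemma delta_i_le_Delta: "i \<in> {1..N} \<Longrightarrow> delta_i n q N x \<alpha> i \<le> Delta n q N x \<alpha>"
  unfolding Delta_def Setcompr_eq_image by (intro Max_ge) auto

lemma Delta_attained: "\<exists>i \<in> {1..N}. Delta n q N x \<alpha> = delta_i n q N x \<alpha> i"
proof -
  have "Delta n q N x \<alpha> \<in> (\<lambda>i. delta_i n q N x \<alpha> i) ` {1..N}"
    unfolding Delta_def Setcompr_eq_image using N_pos by (intro Max_in) auto
  then show ?thesis by auto
qed

lemma Delta_nonneg: "0 \<le> Delta n q N x \<alpha>"
proof -
  obtain A where "delta_i n q N x \<alpha> 1 = delta_iA N x \<alpha> 1 A"
    using delta_i_attained by blast
  moreover have "0 \<le> delta_iA N x \<alpha> 1 A"
    by (rule order.trans[of _ "pos (\<alpha> 1 - Min (x 1 ` A))"]) (auto simp: delta_iA_def pos_def)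
  ultimately show ?thesis using delta_i_le_Delta[of 1] N_pos by simp
qed

lemma delta_i_le_max_error:
  assumes "q_maxitive_capacity n q \<mu>" and i: "i \<in> {1..N}"
  shows "delta_i n q N x \<alpha> i \<le> max_error n N x \<alpha> \<mu>"
proof -
  let ?e = "max_error n N x \<alpha> \<mu>"
  have err: "\<bar>sugeno n \<mu> (x k) - \<alpha> k\<bar> \<le> ?e" if "k \<in> {1..N}" for k
    using that by (rule max_error_ge)
  have "0 \<le> ?e" using err[OF i] by linarith
  have "q_maxitive n q \<mu>" and "\<mu> {} = 0"
    using assms(1) by (auto simp: q_maxitive_capacity_def is_capacity_def)
  then consider "sugeno n \<mu> (x i) = 0"
    | A where "A \<in> small_sets n q" "sugeno n \<mu> (x i) = min (Min (x i ` A)) (\<mu> A)"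
    using sugeno_q_maxitive_attained by blast
  then obtain B where "B \<in> small_sets n q" "delta_iA N x \<alpha> i B \<le> ?e"
  proof cases
    case 1
    then have "\<alpha> i \<le> ?e" using err[OF i] by simp
    moreover have "0 \<le> x i 1" "0 \<le> \<alpha> i" using x_nonneg[OF i] \<alpha>_unit[OF i] q_range by auto
    moreover have "sigma_G (\<alpha> i) (Min (x l ` {1})) (\<alpha> l) \<le> ?e" if "l \<in> {1..N}" for l
      using \<alpha>_unit[OF that] \<open>\<alpha> i \<le> ?e\<close> \<open>0 \<le> \<alpha> i\<close>
      by (simp add: sigma_G_def pos_def min_def max_def)
    ultimately have "delta_iA N x \<alpha> i {1} \<le> ?e"
      using N_pos by (simp add: delta_iA_le_iff pos_def)
    then show ?thesis using that singleton_small by blast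
  next
    case (2 A)
    have "A \<noteq> {}" "A \<subseteq> {1..n}" using 2(1) by (auto simp: small_sets_def)
    have "sigma_G (\<alpha> i) (Min (x l ` A)) (\<alpha> l) \<le> ?e" if l: "l \<in> {1..N}" for l
    proof (rule sigma_G_le[OF \<open>0 \<le> ?e\<close>])
      show "\<alpha> i - ?e \<le> min (Min (x i ` A)) (\<mu> A)" using 2(2) err[OF i] by linarith
      have "min (minx (x l) A) (\<mu> A) \<le> sugeno n \<mu> (x l)"
        using \<open>A \<subseteq> {1..n}\<close> by (rule sugeno_ge)
      then show "min (Min (x l ` A)) (\<mu> A) \<le> \<alpha> l + ?e"
        using err[OF l] \<open>A \<noteq> {}\<close> by (simp add: minx_def)
    qed
    moreover have "pos (\<alpha> i - Min (x i ` A)) \<le> ?e"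
      using 2(2) err[OF i] \<open>0 \<le> ?e\<close> by (simp add: pos_def)
    ultimately have "delta_iA N x \<alpha> i A \<le> ?e" using N_pos by (simp add: delta_iA_le_iff)
    then show ?thesis using that 2(1) by blast
  qed
  then show ?thesis using delta_i_le by (meson order.trans)
qed

lemma Delta_le_max_error:
  "q_maxitive_capacity n q \<mu> \<Longrightarrow> Delta n q N x \<alpha> \<le> max_error n N x \<alpha> \<mu>"
  using Delta_attained delta_i_le_max_error by metis

abbreviation eta_q :: "nat set \<Rightarrow> real" where
  "eta_q \<equiv> eta n q N x \<alpha>"

lemma eta_eq_Min_image:
  "eta_q A = Min ((\<lambda>k. godel_imp (Min (x k ` A)) (min (\<alpha> k + Delta n q N x \<alpha>) 1)) ` {1..N})"
  unfolding eta_def Setcompr_eq_image ..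

lemma eta_le:
  "k \<in> {1..N} \<Longrightarrow> eta_q A \<le> godel_imp (Min (x k ` A)) (min (\<alpha> k + Delta n q N x \<alpha>) 1)"
  unfolding eta_eq_Min_image by (rule Min_le) auto

lemma eta_attained:
  "\<exists>k \<in> {1..N}. eta_q A = godel_imp (Min (x k ` A)) (min (\<alpha> k + Delta n q N x \<alpha>) 1)"
proof -
  have "eta_q A \<in> (\<lambda>k. godel_imp (Min (x k ` A)) (min (\<alpha> k + Delta n q N x \<alpha>) 1)) ` {1..N}"
    unfolding eta_eq_Min_image using N_pos by (intro Min_in) auto
  then show ?thesis by auto
qed

lemma eta_bounds: "0 \<le> eta_q A \<and> eta_q A \<le> 1"
proof -
  obtain k where k: "k \<in> {1..N}"
    "eta_q A = godel_imp (Min (x k ` A)) (min (\<alpha> k + Delta n q N x \<alpha>) 1)"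
    using eta_attained by blast
  have "0 \<le> min (\<alpha> k + Delta n q N x \<alpha>) 1" using \<alpha>_unit[OF k(1)] Delta_nonneg by simp
  then show ?thesis using k(2) by (simp add: godel_imp_def)
qed

lemma eta_mono:
  assumes "A \<subseteq> B" and "A \<noteq> {}" and "finite B"
  shows "eta_q A \<le> eta_q B"
proof -
  obtain k where k: "k \<in> {1..N}"
    "eta_q B = godel_imp (Min (x k ` B)) (min (\<alpha> k + Delta n q N x \<alpha>) 1)"
    using eta_attained by blast
  have "Min (x k ` B) \<le> Min (x k ` A)" using assms by (intro Min_antimono) auto
  then have "godel_imp (Min (x k ` A)) (min (\<alpha> k + Delta n q N x \<alpha>) 1)
      \<le> godel_imp (Min (x k ` B)) (min (\<alpha> k + Delta n q N x \<alpha>) 1)"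
    by (rule godel_imp_antimono) simp
  then show ?thesis using eta_le[OF k(1), of A] k(2) by linarith
qed

definition eta_capacity :: "nat set \<Rightarrow> real" where
  "eta_capacity = maxitive_ext q (\<lambda>Y. if Y = {} then 0 else eta_q Y)"

lemma eta_capacity_base_mono:
  "A \<subseteq> B \<Longrightarrow> finite B \<Longrightarrow> (if A = {} then 0 else eta_q A) \<le> (if B = {} then 0 else eta_q B)"
  using eta_mono eta_bounds by auto

lemma eta_capacity_small: "A \<in> small_sets n q \<Longrightarrow> eta_capacity A = eta_q A"
  unfolding eta_capacity_def small_sets_def
  by (subst maxitive_ext_eq[OF eta_capacity_base_mono]) (auto intro: finite_subset)

lemma q_maxitive_eta_capacity: "q_maxitive n q eta_capacity"
  unfolding eta_capacity_def by (rule q_maxitive_maxitive_ext[OF eta_capacity_base_mono])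

lemma eta_capacity_empty: "eta_capacity {} = 0"
  unfolding eta_capacity_def by (subst maxitive_ext_eq[OF eta_capacity_base_mono]) auto

lemma q_maxitive_capacity_eta_capacity:
  assumes "A \<subseteq> {1..n}" and "card A = q" and "eta_q A = 1"
  shows "q_maxitive_capacity n q eta_capacity"
proof -
  have "A \<noteq> {}" using assms(2) q_range by auto
  then have "is_capacity n eta_capacity"
    unfolding eta_capacity_def using assms eta_bounds
    by (intro is_capacity_maxitive_ext[OF eta_capacity_base_mono, of _ A]) auto
  then show ?thesis using q_maxitive_eta_capacity by (simp add: q_maxitive_capacity_def)
qed

lemma sugeno_eta_capacity_le:
  assumes k: "k \<in> {1..N}"
  shows "sugeno n eta_capacity (x k) \<le> \<alpha> k + Delta n q N x \<alpha>"
proof -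
  consider "sugeno n eta_capacity (x k) = 0"
    | A where "A \<in> small_sets n q"
        "sugeno n eta_capacity (x k) = min (Min (x k ` A)) (eta_capacity A)"
    using sugeno_q_maxitive_attained[OF q_maxitive_eta_capacity eta_capacity_empty] by blast
  then show ?thesis
  proof cases
    case 1
    then show ?thesis using \<alpha>_unit[OF k] Delta_nonneg by simp
  next
    case (2 A)
    let ?m = "Min (x k ` A)" and ?b = "min (\<alpha> k + Delta n q N x \<alpha>) 1"
    have "sugeno n eta_capacity (x k) = min ?m (eta_q A)"
      using 2 eta_capacity_small by simp
    also have "\<dots> \<le> min ?m (godel_imp ?m ?b)"
      using eta_le[OF k] by (rule min.mono[OF order.refl])
    also have "\<dots> \<le> ?b" by (rule min_godel_imp_le)
    finally show ?thesis by simp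
  qed
qed

lemma sugeno_eta_capacity_ge:
  assumes k: "k \<in> {1..N}"
  shows "\<alpha> k - Delta n q N x \<alpha> \<le> sugeno n eta_capacity (x k)"
proof -
  obtain A where A: "A \<in> small_sets n q" "delta_i n q N x \<alpha> k = delta_iA N x \<alpha> k A"
    using delta_i_attained by blast
  have "A \<noteq> {}" "A \<subseteq> {1..n}" using A(1) by (auto simp: small_sets_def)
  have \<delta>: "delta_iA N x \<alpha> k A \<le> Delta n q N x \<alpha>" using A(2) delta_i_le_Delta[OF k] by simp
  then have "\<alpha> k - Delta n q N x \<alpha> \<le> Min (x k ` A)"
    using N_pos by (simp add: delta_iA_le_iff pos_def)
  moreover have "\<alpha> k - Delta n q N x \<alpha> \<le> eta_q A"
  proof -
    obtain l where l: "l \<in> {1..N}"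
      "eta_q A = godel_imp (Min (x l ` A)) (min (\<alpha> l + Delta n q N x \<alpha>) 1)"
      using eta_attained by blast
    have "sigma_G (\<alpha> k) (Min (x l ` A)) (\<alpha> l) \<le> Delta n q N x \<alpha>"
      using \<delta> l(1) N_pos by (simp add: delta_iA_le_iff)
    then have "\<alpha> k - Delta n q N x \<alpha> \<le> godel_imp (Min (x l ` A)) (min (\<alpha> l + Delta n q N x \<alpha>) 1)"
      using Delta_nonneg \<alpha>_unit[OF k] by (intro le_godel_imp_if_sigma_G_le) auto
    then show ?thesis using l(2) by simp
  qed
  moreover have "min (minx (x k) A) (eta_capacity A) \<le> sugeno n eta_capacity (x k)"
    using \<open>A \<subseteq> {1..n}\<close> by (rule sugeno_ge)
  ultimately show ?thesis
    using \<open>A \<noteq> {}\<close> eta_capacity_small[OF A(1)] by (simp add: minx_def)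
qed

lemma max_error_eta_capacity_le: "max_error n N x \<alpha> eta_capacity \<le> Delta n q N x \<alpha>"
  unfolding max_error_le_iff[OF N_pos]
  using sugeno_eta_capacity_le sugeno_eta_capacity_ge by (fastforce simp: abs_le_iff)

end

theorem theorem4:
  fixes n N q :: nat and x :: "nat \<Rightarrow> nat \<Rightarrow> real" and \<alpha> :: "nat \<Rightarrow> real"
  assumes "N \<ge> 1"
    and "\<And>k i. k \<in> {1..N} \<Longrightarrow> i \<in> {1..n} \<Longrightarrow> 0 \<le> x k i \<and> x k i \<le> 1"
    and "\<And>k. k \<in> {1..N} \<Longrightarrow> 0 \<le> \<alpha> k \<and> \<alpha> k \<le> 1"
    and "q \<in> {1..n}"
    and "\<exists>A. A \<subseteq> {1..n} \<and> card A = q \<and> eta n q N x \<alpha> A = 1"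
  shows "(\<exists>\<mu>. q_maxitive_capacity n q \<mu> \<and> max_error n N x \<alpha> \<mu> = Delta n q N x \<alpha>) \<and>
         (\<forall>\<mu>. q_maxitive_capacity n q \<mu> \<longrightarrow> Delta n q N x \<alpha> \<le> max_error n N x \<alpha> \<mu>)"
proof -
  interpret training_data n N q x \<alpha>
    using assms(1-4) by unfold_locales auto
  have capacity: "q_maxitive_capacity n q eta_capacity"
    using assms(5) q_maxitive_capacity_eta_capacity by blast
  have "max_error n N x \<alpha> eta_capacity = Delta n q N x \<alpha>"
    using max_error_eta_capacity_le Delta_le_max_error[OF capacity] by (rule antisym)
  then show ?thesis using capacity Delta_le_max_error by blast
qed

end
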